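(* Let $p>1$ and let $\varphi:\mathbb{R}^n\to\mathbb{R}\cup\{+\infty\}$ be proper and lower semicontinuous. The following are equivalent: (a) $\varphi$ is high-order prox-bounded with order $p$; (b) there exists $\ell>0$ such that $\varphi(\cdot)+\ell\|\cdot\|^p$ is bounded from below on $\mathbb{R}^n$; (c) $\liminf_{\|x\|\to\infty}\frac{\varphi(x)}{\|x\|^p}>-\infty$.
   Context: For $p>1$, $\gamma>0$, the high-order Moreau envelope of $\varphi$ is $\varphi^p_\gamma(x):=\inf_{y\in\mathbb{R}^n}\big(\varphi(y)+\frac{1}{p\gamma}\|x-y\|^p\big)$. The function $\varphi$ is called high-order prox-bounded with order $p$ if there exist $\gamma>0$ and $x\in\mathbb{R}^n$ with $\varphi^p_\gamma(x)>-\infty$. $\|\cdot\|$ is the Euclidean norm. *)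

theory Defs
  imports "HOL-Analysis.Analysis"
begin

definition proper_fun :: "('a \<Rightarrow> ereal) \<Rightarrow> bool" where
  "proper_fun \<phi> \<longleftrightarrow> (\<forall>x. \<phi> x \<noteq> -\<infinity>) \<and> (\<exists>x. \<phi> x < \<infinity>)"

definition lsc_fun :: "('a::topological_space \<Rightarrow> ereal) \<Rightarrow> bool" where
  "lsc_fun \<phi> \<longleftrightarrow> (\<forall>x. \<phi> x \<le> Liminf (at x) \<phi>)"

definition moreau_env :: "real \<Rightarrow> real \<Rightarrow> ('a::real_normed_vector \<Rightarrow> ereal) \<Rightarrow> 'a \<Rightarrow> ereal" where
  "moreau_env p \<gamma> \<phi> x = (INF y. \<phi> y + ereal (1 / (p * \<gamma>) * norm (x - y) powr p))"

definition ho_prox_bounded :: "real \<Rightarrow> ('a::real_normed_vector \<Rightarrow> ereal) \<Rightarrow> bool" where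
  "ho_prox_bounded p \<phi> \<longleftrightarrow> (\<exists>\<gamma>>0. \<exists>x. moreau_env p \<gamma> \<phi> x > -\<infinity>)"

end

theory Submission
  imports Defs
begin

text \<open>
  A lower bound \<open>c \<le> moreau_env p \<gamma> \<phi> x\<^sub>0\<close> says that \<open>\<phi> + \<parallel>x\<^sub>0 - \<cdot>\<parallel>\<^sup>p / (p\<gamma>)\<close> is bounded
  below; since \<open>\<parallel>x\<^sub>0 - y\<parallel>\<^sup>p \<le> 2\<^sup>p (\<parallel>x\<^sub>0\<parallel>\<^sup>p + \<parallel>y\<parallel>\<^sup>p)\<close>, the centre \<open>x\<^sub>0\<close> can be moved to \<open>0\<close>
  at the price of enlarging the coefficient, which gives (a) \<open>\<Longleftrightarrow>\<close> (b).
  Dividing the minorant \<open>c - l \<parallel>x\<parallel>\<^sup>p\<close> by \<open>\<parallel>x\<parallel>\<^sup>p\<close> gives (c). Conversely, (c) yields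
  \<open>\<phi> x \<ge> m \<parallel>x\<parallel>\<^sup>p\<close> outside a large ball, while on the ball a lower semicontinuous
  function without the value \<open>-\<infinity>\<close> is bounded below by compactness.
\<close>

lemma MInfty_less_iff_ereal_lower_bound: "-\<infinity> < e \<longleftrightarrow> (\<exists>c::real. ereal c \<le> e)"
  by (cases e) auto

lemma ereal_le_plus_real_iff: "ereal c \<le> e + ereal a \<longleftrightarrow> ereal (c - a) \<le> e"
  by (cases e) auto

lemma lsc_fun_open_superlevel:
  fixes \<phi> :: "'a::topological_space \<Rightarrow> ereal"
  assumes "lsc_fun \<phi>"
  shows "open {y. t < \<phi> y}"
proof (subst open_subopen, intro ballI)
  fix x assume x: "x \<in> {y. t < \<phi> y}"
  have "t < Liminf (at x) \<phi>"
    using x assms unfolding lsc_fun_def by (auto intro: less_le_trans)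
  then have "eventually (\<lambda>y. t < \<phi> y) (at x)"
    by (rule less_LiminfD)
  then have "eventually (\<lambda>y. t < \<phi> y) (nhds x)"
    using x unfolding eventually_at_filter by (auto elim!: eventually_mono)
  then show "\<exists>T. open T \<and> x \<in> T \<and> T \<subseteq> {y. t < \<phi> y}"
    unfolding eventually_nhds by auto
qed

lemma lsc_fun_bounded_below_on_compact:
  fixes \<phi> :: "'a::topological_space \<Rightarrow> ereal"
  assumes lsc: "lsc_fun \<phi>" and no_MInf: "\<forall>x. \<phi> x \<noteq> -\<infinity>" and "compact S"
  shows "\<exists>c::real. \<forall>x\<in>S. ereal c \<le> \<phi> x"
proof -
  have "S \<subseteq> (\<Union>k::nat. {y. ereal (- real k) < \<phi> y})"
  proof
    fix x
    obtain k :: nat where "ereal (- real k) < \<phi> x"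
    proof (cases "\<phi> x")
      case (real r)
      obtain k :: nat where "- r < real k"
        using reals_Archimedean2 by blast
      then show ?thesis by (intro that[of k]) (simp add: real)
    qed (use that no_MInf in auto)
    then show "x \<in> (\<Union>k::nat. {y. ereal (- real k) < \<phi> y})" by blast
  qed
  then obtain K where "finite K" and cover: "S \<subseteq> (\<Union>k\<in>K. {y. ereal (- real k) < \<phi> y})"
    using compactE_image[OF \<open>compact S\<close>] lsc_fun_open_superlevel[OF lsc] by metis
  have "ereal (- real (Max (insert 0 K))) \<le> \<phi> x" if "x \<in> S" for x
  proof -
    obtain k where "k \<in> K" and "ereal (- real k) < \<phi> x"
      using cover \<open>x \<in> S\<close> by auto
    moreover have "k \<le> Max (insert 0 K)"
      using \<open>k \<in> K\<close> \<open>finite K\<close> by simp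
    ultimately show ?thesis
      by (metis ereal_less_eq(3) neg_le_iff_le of_nat_mono order.trans less_imp_le)
  qed
  then show ?thesis by blast
qed

lemma norm_diff_powr_le:
  fixes x y :: "'a::real_normed_vector"
  assumes "p > 0"
  shows "norm (x - y) powr p \<le> 2 powr p * (norm x powr p + norm y powr p)"
proof -
  define m where "m = max (norm x) (norm y)"
  have "norm (x - y) powr p \<le> (2 * m) powr p"
    using norm_triangle_ineq4[of x y] assms unfolding m_def by (intro powr_mono2) auto
  also have "\<dots> = 2 powr p * m powr p"
    unfolding m_def by (simp add: powr_mult)
  also have "\<dots> \<le> 2 powr p * (norm x powr p + norm y powr p)"
    unfolding m_def by (auto simp: max_def)
  finally show ?thesis .
qed

lemma ereal_le_moreau_env_iff:
  "ereal c \<le> moreau_env p \<gamma> \<phi> x \<longleftrightarrow>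
    (\<forall>y. ereal (c - 1 / (p * \<gamma>) * norm (x - y) powr p) \<le> \<phi> y)"
  by (simp add: moreau_env_def le_INF_iff ereal_le_plus_real_iff)

lemma ho_prox_bounded_iff_ereal_lower_bound:
  "ho_prox_bounded p \<phi> \<longleftrightarrow>
    (\<exists>\<gamma>>0. \<exists>x c. \<forall>y. ereal (c - 1 / (p * \<gamma>) * norm (x - y) powr p) \<le> \<phi> y)"
  unfolding ho_prox_bounded_def MInfty_less_iff_ereal_lower_bound ereal_le_moreau_env_iff
  by blast

lemma ho_prox_bounded_imp_powr_minorant:
  fixes \<phi> :: "'a::real_normed_vector \<Rightarrow> ereal"
  assumes "p > 0" and "ho_prox_bounded p \<phi>"
  shows "\<exists>l>0. \<exists>c::real. \<forall>x. \<phi> x + ereal (l * norm x powr p) \<ge> ereal c"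
proof -
  obtain \<gamma> x\<^sub>0 c\<^sub>0 where "\<gamma> > 0"
    and bound: "\<And>y. ereal (c\<^sub>0 - 1 / (p * \<gamma>) * norm (x\<^sub>0 - y) powr p) \<le> \<phi> y"
    using assms(2) unfolding ho_prox_bounded_iff_ereal_lower_bound by blast
  define k where "k = 1 / (p * \<gamma>)"
  have "k > 0"
    using \<open>p > 0\<close> \<open>\<gamma> > 0\<close> unfolding k_def by simp
  define l where "l = k * 2 powr p"
  define c where "c = c\<^sub>0 - l * norm x\<^sub>0 powr p"
  have "ereal (c - l * norm y powr p) \<le> \<phi> y" for y
  proof -
    have "k * norm (x\<^sub>0 - y) powr p \<le> k * (2 powr p * (norm x\<^sub>0 powr p + norm y powr p))"
      using norm_diff_powr_le[OF \<open>p > 0\<close>] \<open>k > 0\<close> by (simp add: mult_left_mono)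
    then have "c - l * norm y powr p \<le> c\<^sub>0 - k * norm (x\<^sub>0 - y) powr p"
      unfolding c_def l_def by (simp add: algebra_simps)
    then show ?thesis
      using bound[of y] unfolding k_def by (metis ereal_less_eq(3) order.trans)
  qed
  moreover have "l > 0"
    using \<open>k > 0\<close> unfolding l_def by simp
  ultimately show ?thesis
    by (auto simp: ereal_le_plus_real_iff)
qed

lemma powr_minorant_imp_ho_prox_bounded:
  fixes \<phi> :: "'a::real_normed_vector \<Rightarrow> ereal"
  assumes "p > 0" and "l > 0" and minorant: "\<forall>x. \<phi> x + ereal (l * norm x powr p) \<ge> ereal c"
  shows "ho_prox_bounded p \<phi>"
proof -
  define \<gamma> where "\<gamma> = 1 / (p * l)"
  have "\<gamma> > 0" and "1 / (p * \<gamma>) = l"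
    using assms(1,2) unfolding \<gamma>_def by auto
  then have "\<forall>y. ereal (c - 1 / (p * \<gamma>) * norm (0 - y) powr p) \<le> \<phi> y"
    using minorant by (simp add: ereal_le_plus_real_iff)
  then show ?thesis
    unfolding ho_prox_bounded_iff_ereal_lower_bound using \<open>\<gamma> > 0\<close> by blast
qed

lemma powr_minorant_imp_Liminf_gt_MInfty:
  fixes \<phi> :: "'a::real_normed_vector \<Rightarrow> ereal"
  assumes "p \<ge> 0" and "l \<ge> 0" and minorant: "\<forall>x. \<phi> x + ereal (l * norm x powr p) \<ge> ereal c"
  shows "Liminf at_infinity (\<lambda>x. \<phi> x / ereal (norm x powr p)) > -\<infinity>"
proof -
  have "ereal (- \<bar>c\<bar> - l) \<le> \<phi> x / ereal (norm x powr p)" if "1 \<le> norm x" for x :: 'a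
  proof -
    define d where "d = norm x powr p"
    have "d \<ge> 1"
      unfolding d_def using that \<open>p \<ge> 0\<close> by (simp add: ge_one_powr_ge_zero)
    then have "\<bar>c\<bar> \<le> \<bar>c\<bar> * d"
      using mult_left_mono[of 1 d "\<bar>c\<bar>"] by simp
    then have "d * (- \<bar>c\<bar> - l) \<le> c - l * d"
      by (simp add: algebra_simps)
    also have "ereal (c - l * d) \<le> \<phi> x"
      using minorant unfolding d_def by (simp add: ereal_le_plus_real_iff)
    finally have "ereal d * ereal (- \<bar>c\<bar> - l) \<le> \<phi> x" by simp
    then show ?thesis
      using \<open>d \<ge> 1\<close> unfolding d_def[symmetric] by (simp add: ereal_le_divide_pos)
  qed
  then have "ereal (- \<bar>c\<bar> - l) \<le> Liminf at_infinity (\<lambda>x. \<phi> x / ereal (norm x powr p))"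
    by (intro Liminf_bounded) (auto simp: eventually_at_infinity)
  then show ?thesis
    using MInfty_less_iff_ereal_lower_bound by blast
qed

lemma Liminf_gt_MInfty_imp_powr_minorant:
  fixes \<phi> :: "'a::{real_normed_vector,heine_borel} \<Rightarrow> ereal"
  assumes lsc: "lsc_fun \<phi>" and no_MInf: "\<forall>x. \<phi> x \<noteq> -\<infinity>"
    and Liminf: "Liminf at_infinity (\<lambda>x. \<phi> x / ereal (norm x powr p)) > -\<infinity>"
  shows "\<exists>l>0. \<exists>c::real. \<forall>x. \<phi> x + ereal (l * norm x powr p) \<ge> ereal c"
proof -
  obtain m :: real where "ereal m < Liminf at_infinity (\<lambda>x. \<phi> x / ereal (norm x powr p))"
    using Liminf ereal_dense2 by blast
  then have "eventually (\<lambda>x. ereal m < \<phi> x / ereal (norm x powr p)) at_infinity"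
    by (rule less_LiminfD)
  then obtain R where R: "\<And>x. R \<le> norm x \<Longrightarrow> ereal m < \<phi> x / ereal (norm x powr p)"
    unfolding eventually_at_infinity by blast
  obtain c\<^sub>1 where c\<^sub>1: "\<And>x. x \<in> cball 0 \<bar>R\<bar> \<Longrightarrow> ereal c\<^sub>1 \<le> \<phi> x"
    using lsc_fun_bounded_below_on_compact[OF lsc no_MInf compact_cball] by blast
  define l where "l = \<bar>m\<bar> + 1"
  define c where "c = min 0 c\<^sub>1"
  have "ereal (c - l * norm x powr p) \<le> \<phi> x" for x :: 'a
  proof (cases "norm x \<le> \<bar>R\<bar>")
    case True
    then have "ereal c\<^sub>1 \<le> \<phi> x" by (intro c\<^sub>1) simp
    moreover have "c \<le> c\<^sub>1" and "0 \<le> l * norm x powr p"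
      unfolding c_def l_def by simp_all
    ultimately show ?thesis
      by (metis diff_le_eq ereal_less_eq(3) le_add_same_cancel1 order.trans)
  next
    case False
    define d where "d = norm x powr p"
    have "norm x > 0"
      using False abs_ge_zero[of R] by linarith
    then have "d > 0"
      unfolding d_def by simp
    have "ereal (d * m) < \<phi> x"
      using R[of x] False \<open>d > 0\<close> unfolding d_def[symmetric]
      by (simp add: ereal_less_divide_pos)
    moreover have "ereal (c - l * d) \<le> ereal (d * m)"
    proof -
      have "- \<bar>m\<bar> * d \<le> m * d"
        using \<open>d > 0\<close> by (intro mult_right_mono) auto
      moreover have "c \<le> 0"
        unfolding c_def by simp
      ultimately show ?thesis
        using \<open>d > 0\<close> unfolding l_def by (simp add: algebra_simps)
    qed
    ultimately show ?thesis
      unfolding d_def by (meson order.trans less_imp_le)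
  qed
  moreover have "l > 0"
    unfolding l_def by simp
  ultimately show ?thesis
    by (auto simp: ereal_le_plus_real_iff)
qed

theorem proposition1:
  fixes p :: real and \<phi> :: "real ^ 'n \<Rightarrow> ereal"
  assumes "p > 1" and "proper_fun \<phi>" and "lsc_fun \<phi>"
  shows "(ho_prox_bounded p \<phi> \<longleftrightarrow>
            (\<exists>l>0. \<exists>c::real. \<forall>x. \<phi> x + ereal (l * norm x powr p) \<ge> ereal c))
       \<and> (ho_prox_bounded p \<phi> \<longleftrightarrow>
            Liminf at_infinity (\<lambda>x. \<phi> x / ereal (norm x powr p)) > -\<infinity>)"
proof -
  have "p > 0"
    using \<open>p > 1\<close> by simp
  have no_MInf: "\<forall>x. \<phi> x \<noteq> -\<infinity>"
    using \<open>proper_fun \<phi>\<close> unfolding proper_fun_def by blast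
  have "ho_prox_bounded p \<phi> \<longleftrightarrow>
      (\<exists>l>0. \<exists>c::real. \<forall>x. \<phi> x + ereal (l * norm x powr p) \<ge> ereal c)"
    using ho_prox_bounded_imp_powr_minorant[OF \<open>p > 0\<close>]
      powr_minorant_imp_ho_prox_bounded[OF \<open>p > 0\<close>] by blast
  moreover have "(\<exists>l>0. \<exists>c::real. \<forall>x. \<phi> x + ereal (l * norm x powr p) \<ge> ereal c) \<longleftrightarrow>
      Liminf at_infinity (\<lambda>x. \<phi> x / ereal (norm x powr p)) > -\<infinity>"
    using powr_minorant_imp_Liminf_gt_MInfty[of p, OF less_imp_le[OF \<open>p > 0\<close>] less_imp_le]
      Liminf_gt_MInfty_imp_powr_minorant[OF \<open>lsc_fun \<phi>\<close> no_MInf] by blast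
  ultimately show ?thesis by blast
qed

end
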